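(* For a quantum sequence ensemble $\mathcal{E}=\bigotimes_{l=1}^{L}\mathcal{E}^{l}$ and $\vec{x}=(x_{1},\ldots,x_{L})$ with $x_l\in\{1,\ldots,n_l\}$, we have \[ \mathcal{C}_{\vec{x}}(\mathcal{E})=\prod_{l=1}^{L}\mathcal{C}_{x_{l}}(\mathcal{E}^{l}). \]
   Context: Let $\mathcal{E}^{l}=\{\eta_{i}^{l},\rho_{i}^{l}\}_{i\in\{1,\ldots,n_{l}\}}$, $l=1,\ldots,L$, be quantum state ensembles (density operators $\rho_i^l$ on finite-dimensional Hilbert spaces, prepared with nonzero probabilities $\eta_i^l$), with average states $\rho_0^l=\sum_i\eta_i^l\rho_i^l$. The quantum sequence ensemble is $\mathcal{E}=\bigotimes_{l=1}^{L}\mathcal{E}^{l}=\{\eta_{\vec{c}},\rho_{\vec{c}}\}_{\vec{c}}$ with $\eta_{\vec{c}}=\prod_l\eta_{c_l}^l$, $\rho_{\vec{c}}=\bigotimes_l\rho_{c_l}^l$, and average state $\rho_0=\bigotimes_l\rho_0^l$. For any ensemble $\{\eta_i,\rho_i\}_i$ with average state $\rho_0$, and measurements (POVMs) $\{M_?\}\cup\{M_i\}_i$ where outcome $M_i$ means guessing $\rho_i$ and $M_?$ is inconclusive, the maximum confidence to identify $\rho_x$ is $\mathcal{C}_x=\max \eta_x\mathrm{Tr}(\rho_xM_x)/\mathrm{Tr}(\rho_0M_x)$ over all measurements with $\mathrm{Tr}(\rho_0M_x)>0$, i.e. the maximal conditional probability that $\rho_x$ was prepared given outcome $M_x$. $\mathcal{C}_{x_l}(\mathcal{E}^l)$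 is this quantity for ensemble $\mathcal{E}^l$, and $\mathcal{C}_{\vec{x}}(\mathcal{E})$ for the sequence ensemble. *)

theory Defs
  imports "HOL-Analysis.Analysis"
begin

text \<open>Linear operators on a finite-dimensional Hilbert space are represented as
  complex matrices indexed by a finite index set I (an orthonormal basis).\<close>

type_synonym 'a op = "'a \<Rightarrow> 'a \<Rightarrow> complex"

definition tr :: "'a set \<Rightarrow> 'a op \<Rightarrow> complex" where
  "tr I A = (\<Sum>i\<in>I. A i i)"

definition mmult :: "'a set \<Rightarrow> 'a op \<Rightarrow> 'a op \<Rightarrow> 'a op" where
  "mmult I A B = (\<lambda>i k. \<Sum>j\<in>I. A i j * B j k)"

definition psd :: "'a set \<Rightarrow> 'a op \<Rightarrow> bool" where
  "psd I A \<longleftrightarrow> (\<forall>i\<in>I. \<forall>j\<in>I. A i j = cnj (A j i)) \<and>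
     (\<forall>v :: 'a \<Rightarrow> complex. \<exists>r::real. r \<ge> 0 \<and>
        (\<Sum>i\<in>I. \<Sum>j\<in>I. cnj (v i) * A i j * v j) = of_real r)"

definition density :: "'a set \<Rightarrow> 'a op \<Rightarrow> bool" where
  "density I \<rho> \<longleftrightarrow> psd I \<rho> \<and> tr I \<rho> = 1"

definition ensemble :: "'a set \<Rightarrow> 'k set \<Rightarrow> ('k \<Rightarrow> real) \<Rightarrow> ('k \<Rightarrow> 'a op) \<Rightarrow> bool" where
  "ensemble I K \<eta> \<rho> \<longleftrightarrow> finite I \<and> I \<noteq> {} \<and> finite K \<and> K \<noteq> {} \<and>
     (\<forall>k\<in>K. \<eta> k > 0 \<and> density I (\<rho> k)) \<and> (\<Sum>k\<in>K. \<eta> k) = 1"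

definition avg_state :: "'k set \<Rightarrow> ('k \<Rightarrow> real) \<Rightarrow> ('k \<Rightarrow> 'a op) \<Rightarrow> 'a op" where
  "avg_state K \<eta> \<rho> = (\<lambda>a b. \<Sum>k\<in>K. of_real (\<eta> k) * \<rho> k a b)"

text \<open>A POVM with outcomes None (inconclusive, M_?) and Some k (guess rho_k).\<close>
definition povm :: "'a set \<Rightarrow> 'k set \<Rightarrow> ('k option \<Rightarrow> 'a op) \<Rightarrow> bool" where
  "povm I K M \<longleftrightarrow> (\<forall>u\<in>insert None (Some ` K). psd I (M u)) \<and>
     (\<forall>i\<in>I. \<forall>j\<in>I. (\<Sum>u\<in>insert None (Some ` K). M u i j) = (if i = j then 1 else 0))"

definition max_conf :: "'a set \<Rightarrow> 'k set \<Rightarrow> ('k \<Rightarrow> real) \<Rightarrow> ('k \<Rightarrow> 'a op) \<Rightarrow> 'k \<Rightarrow> real" where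
  "max_conf I K \<eta> \<rho> x = Sup {\<eta> x * Re (tr I (mmult I (\<rho> x) (M (Some x))))
        / Re (tr I (mmult I (avg_state K \<eta> \<rho>) (M (Some x)))) | M.
      povm I K M \<and> Re (tr I (mmult I (avg_state K \<eta> \<rho>) (M (Some x)))) > 0}"

text \<open>Tensor-product (sequence) ensemble of L ensembles indexed by l = 1..L.
  Basis of the tensor space: functions a with a l in I l; labels: c with c l in K l.\<close>
definition seq_basis :: "nat \<Rightarrow> (nat \<Rightarrow> 'a set) \<Rightarrow> (nat \<Rightarrow> 'a) set" where
  "seq_basis L I = PiE {1..L} I"

definition seq_labels :: "nat \<Rightarrow> (nat \<Rightarrow> 'k set) \<Rightarrow> (nat \<Rightarrow> 'k) set" where
  "seq_labels L K = PiE {1..L} K"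

definition seq_prob :: "nat \<Rightarrow> (nat \<Rightarrow> 'k \<Rightarrow> real) \<Rightarrow> (nat \<Rightarrow> 'k) \<Rightarrow> real" where
  "seq_prob L \<eta> c = (\<Prod>l\<in>{1..L}. \<eta> l (c l))"

definition seq_state :: "nat \<Rightarrow> (nat \<Rightarrow> 'k \<Rightarrow> 'a op) \<Rightarrow> (nat \<Rightarrow> 'k) \<Rightarrow> (nat \<Rightarrow> 'a) op" where
  "seq_state L \<rho> c = (\<lambda>a b. \<Prod>l\<in>{1..L}. \<rho> l (c l) (a l) (b l))"

end

theory Submission
  imports Defs
begin

text \<open>
  The maximum confidence \<open>C\<^sub>x\<close> is the least \<open>c\<close> with \<open>\<eta>\<^sub>x \<rho>\<^sub>x \<le> c \<rho>\<^sub>0\<close> in the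
  Loewner order. Any such \<open>c\<close> bounds every confidence, since \<open>Tr(\<cdot> M\<^sub>x)\<close> is monotone;
  conversely, testing with rank-one measurements shows that \<open>C\<^sub>x\<close> itself is such a \<open>c\<close>.
  Since \<open>0 \<le> A\<^sub>l \<le> B\<^sub>l\<close> implies \<open>\<Otimes>A\<^sub>l \<le> \<Otimes>B\<^sub>l\<close> (tensor products of positive operators
  are positive, via Gram factorisations), these operator inequalities multiply and give
  \<open>C\<^sub>x \<le> \<Prod>C\<^sub>x\<^sub>l\<close> for the sequence ensemble. Conversely, measuring with
  \<open>M\<^sub>x = \<Otimes>M\<^sup>l\<^sub>x\<^sub>l\<close> attains the product of the individual confidences, and the
  supremum of these products is the product of the suprema.
\<close>

section \<open>Quadratic forms and positive semidefinite operators\<close>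

definition quad_form :: "'a set \<Rightarrow> 'a op \<Rightarrow> ('a \<Rightarrow> complex) \<Rightarrow> complex" where
  "quad_form I A v = (\<Sum>i\<in>I. \<Sum>j\<in>I. cnj (v i) * A i j * v j)"

lemma quad_form_add: "quad_form I (\<lambda>i j. A i j + B i j) v = quad_form I A v + quad_form I B v"
  unfolding quad_form_def by (simp add: algebra_simps sum.distrib)

lemma quad_form_diff: "quad_form I (\<lambda>i j. A i j - B i j) v = quad_form I A v - quad_form I B v"
  unfolding quad_form_def by (simp add: algebra_simps sum_subtractf)

lemma quad_form_scale: "quad_form I (\<lambda>i j. c * A i j) v = c * quad_form I A v"
  unfolding quad_form_def by (simp add: algebra_simps sum_distrib_left)

lemma quad_form_sum: "quad_form I (\<lambda>i j. \<Sum>k\<in>G. A k i j) v = (\<Sum>k\<in>G. quad_form I (A k) v)"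
  unfolding quad_form_def sum_distrib_left sum_distrib_right
  by (simp add: sum.swap[where A = G])

lemma quad_form_shift:
  assumes "finite I" "a \<in> I"
  shows "quad_form I B (\<lambda>i. v i + (if i = a then t else 0)) =
     quad_form I B v + t * (\<Sum>i\<in>I. cnj (v i) * B i a) + cnj t * (\<Sum>j\<in>I. B a j * v j)
       + cnj t * t * B a a"
proof -
  have delta: "x * (if P then y else 0) = (if P then x * y else 0)"
    "(if P then y else 0) * x = (if P then y * x else 0)"
    "(\<Sum>j\<in>I. if P then f j else 0) = (if P then (\<Sum>j\<in>I. f j) else 0)"
    for x y :: complex and f :: "_ \<Rightarrow> complex" and P
    by simp_all
  show ?thesis
    using assms
    by (simp add: quad_form_def algebra_simps sum.distrib sum_distrib_left delta
        if_distrib[of cnj] cong: if_cong)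
qed

lemma quad_form_unit:
  assumes "finite I" "a \<in> I"
  shows "quad_form I B (\<lambda>i. if i = a then 1 else 0) = B a a"
  using quad_form_shift[OF assms, of B "\<lambda>_. 0" 1] by (simp add: quad_form_def)

lemma cnj_entry_if_quad_form_real:
  assumes "finite I" and real: "\<And>v. Im (quad_form I A v) = 0" and "i \<in> I" "j \<in> I"
  shows "A j i = cnj (A i j)"
proof -
  define e where "e t = (\<lambda>k. (if k = i then 1 else 0) + (if k = j then t else 0))"
    for t :: complex
  have shift: "quad_form I A (e t) = A i i + t * A i j + cnj t * A j i + cnj t * t * A j j" for t
  proof -
    have "(\<Sum>k\<in>I. cnj (if k = i then 1 else 0) * A k j) = A i j"
      "(\<Sum>k\<in>I. A j k * (if k = i then 1 else 0)) = A j i"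
      using assms(1,3)
      by (simp_all add: if_distrib[of cnj] mult_if_delta mult.commute[of "A j _"] cong: if_cong)
    then show ?thesis
      using quad_form_shift[OF assms(1,4), of A "\<lambda>k. if k = i then 1 else 0" t]
        quad_form_unit[OF assms(1,3)] unfolding e_def by simp
  qed
  have diag: "Im (A i i) = 0" "Im (A j j) = 0"
    using real quad_form_unit assms(1,3,4) by metis+
  have "Im (A i j + A j i) = 0"
    using real[of "e 1"] diag unfolding shift by simp
  moreover have "Re (A i j - A j i) = 0"
    using real[of "e \<i>"] diag unfolding shift by simp
  ultimately show ?thesis by (simp add: complex_eq_iff)
qed

lemma psd_quad_form: "psd I A \<Longrightarrow> quad_form I A v \<in> \<real>\<^sub>\<ge>\<^sub>0"
  unfolding psd_def quad_form_def nonneg_Reals_def by blast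

lemma psd_cnj: "psd I A \<Longrightarrow> i \<in> I \<Longrightarrow> j \<in> I \<Longrightarrow> A j i = cnj (A i j)"
  unfolding psd_def by blast

lemma psd_iff_quad_form:
  assumes "finite I"
  shows "psd I A \<longleftrightarrow> (\<forall>v. quad_form I A v \<in> \<real>\<^sub>\<ge>\<^sub>0)"
proof
  assume nonneg: "\<forall>v. quad_form I A v \<in> \<real>\<^sub>\<ge>\<^sub>0"
  then have "A i j = cnj (A j i)" if "i \<in> I" "j \<in> I" for i j
    using cnj_entry_if_quad_form_real[OF assms _ that(2,1)]
    by (simp add: complex_nonneg_Reals_iff)
  with nonneg show "psd I A"
    unfolding psd_def quad_form_def nonneg_Reals_def by blast
qed (simp add: psd_quad_form)

lemma sum_in_nonneg_Reals: "(\<And>k. k \<in> G \<Longrightarrow> f k \<in> \<real>\<^sub>\<ge>\<^sub>0) \<Longrightarrow> sum f G \<in> \<real>\<^sub>\<ge>\<^sub>0"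
  by (induction G rule: infinite_finite_induct) auto

lemma psd_add: "finite I \<Longrightarrow> psd I A \<Longrightarrow> psd I B \<Longrightarrow> psd I (\<lambda>i j. A i j + B i j)"
  by (simp add: psd_iff_quad_form quad_form_add)

lemma psd_scale: "finite I \<Longrightarrow> psd I A \<Longrightarrow> 0 \<le> r \<Longrightarrow> psd I (\<lambda>i j. of_real r * A i j)"
  by (simp add: psd_iff_quad_form quad_form_scale)

lemma psd_sum: "finite I \<Longrightarrow> (\<And>k. k \<in> G \<Longrightarrow> psd I (A k)) \<Longrightarrow> psd I (\<lambda>i j. \<Sum>k\<in>G. A k i j)"
  by (simp add: psd_iff_quad_form quad_form_sum sum_in_nonneg_Reals)

lemma psd_zero: "psd I (\<lambda>i j. 0)"
  unfolding psd_def by (simp add: exI[of _ 0])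

lemma psd_cong: "(\<And>i j. i \<in> I \<Longrightarrow> j \<in> I \<Longrightarrow> A i j = B i j) \<Longrightarrow> psd I A \<longleftrightarrow> psd I B"
  unfolding psd_def by (simp cong: ball_cong sum.cong)

lemma quad_form_gram:
  assumes "\<And>i j. i \<in> I \<Longrightarrow> j \<in> I \<Longrightarrow> A i j = (\<Sum>k\<in>G. u k i * cnj (u k j))"
  shows "quad_form I A v = of_real (\<Sum>k\<in>G. (cmod (\<Sum>i\<in>I. cnj (v i) * u k i))\<^sup>2)"
proof -
  have "quad_form I A v = (\<Sum>k\<in>G. \<Sum>i\<in>I. \<Sum>j\<in>I. cnj (v i) * u k i * (cnj (u k j) * v j))"
    unfolding quad_form_def using assms
    by (simp add: sum_distrib_left sum_distrib_right sum.swap[where A = G] algebra_simps)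
  also have "\<dots> = (\<Sum>k\<in>G. (\<Sum>i\<in>I. cnj (v i) * u k i) * (\<Sum>j\<in>I. cnj (u k j) * v j))"
    by (simp add: sum_product)
  also have "\<dots> = (\<Sum>k\<in>G. (\<Sum>i\<in>I. cnj (v i) * u k i) * cnj (\<Sum>i\<in>I. cnj (v i) * u k i))"
    by (simp add: mult.commute)
  also have "\<dots> = of_real (\<Sum>k\<in>G. (cmod (\<Sum>i\<in>I. cnj (v i) * u k i))\<^sup>2)"
    by (simp only: of_real_sum complex_norm_square)
  finally show ?thesis .
qed

lemma psd_gram:
  assumes "finite I" "\<And>i j. i \<in> I \<Longrightarrow> j \<in> I \<Longrightarrow> A i j = (\<Sum>k\<in>G. u k i * cnj (u k j))"
  shows "psd I A"
  unfolding psd_iff_quad_form[OF assms(1)]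
  by (simp add: quad_form_gram[OF assms(2)] sum_in_nonneg_Reals)

definition id_op :: "'a op" where
  "id_op = (\<lambda>i j. if i = j then 1 else 0)"

lemma quad_form_id_op:
  assumes "finite I"
  shows "quad_form I id_op w = of_real (\<Sum>i\<in>I. (cmod (w i))\<^sup>2)"
proof -
  have delta: "x * (if P then 1 else 0) * y = (if P then x * y else 0)" for x y :: complex and P
    by simp
  have "quad_form I id_op w = (\<Sum>i\<in>I. w i * cnj (w i))"
    unfolding quad_form_def id_op_def delta using assms by (simp add: mult.commute)
  then show ?thesis
    by (simp only: of_real_sum complex_norm_square)
qed

lemma psd_id_op: "finite I \<Longrightarrow> psd I id_op"
  by (simp add: psd_iff_quad_form quad_form_id_op sum_in_nonneg_Reals)

definition loewner_le :: "'a set \<Rightarrow> 'a op \<Rightarrow> 'a op \<Rightarrow> bool" where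
  "loewner_le I A B \<longleftrightarrow> psd I (\<lambda>i j. B i j - A i j)"

lemma loewner_le_trans:
  "finite I \<Longrightarrow> loewner_le I A B \<Longrightarrow> loewner_le I B C \<Longrightarrow> loewner_le I A C"
  unfolding loewner_le_def using psd_add[of I "\<lambda>i j. C i j - B i j" "\<lambda>i j. B i j - A i j"] by simp

lemma rank_one_projector:
  assumes "finite I" "N = (\<Sum>i\<in>I. (cmod (v i))\<^sup>2)" "N > 0"
  defines "P \<equiv> \<lambda>i j. v i * cnj (v j) / of_real N"
  shows "psd I P" and "loewner_le I P id_op"
proof -
  have qf: "quad_form I P w = of_real ((cmod (\<Sum>i\<in>I. cnj (w i) * v i))\<^sup>2 / N)" for w
  proof -
    have "quad_form I P w = (\<Sum>i\<in>I. cnj (w i) * v i) * cnj (\<Sum>i\<in>I. cnj (w i) * v i) / of_real N"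
      unfolding quad_form_def P_def
      by (simp add: sum_product sum_divide_distrib algebra_simps)
    then show ?thesis
      by (simp only: of_real_divide complex_norm_square)
  qed
  show "psd I P"
    using assms(3) by (simp add: psd_iff_quad_form[OF assms(1)] qf)
  have "(cmod (\<Sum>i\<in>I. cnj (w i) * v i))\<^sup>2 \<le> (\<Sum>i\<in>I. (cmod (w i))\<^sup>2) * N" for w
  proof -
    have "cmod (\<Sum>i\<in>I. cnj (w i) * v i) \<le> (\<Sum>i\<in>I. cmod (w i) * cmod (v i))"
      by (rule order_trans[OF norm_sum]) (simp add: norm_mult)
    then have "(cmod (\<Sum>i\<in>I. cnj (w i) * v i))\<^sup>2 \<le> (\<Sum>i\<in>I. cmod (w i) * cmod (v i))\<^sup>2"
      by (rule power_mono) simp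
    also have "\<dots> \<le> (\<Sum>i\<in>I. (cmod (w i))\<^sup>2) * N"
      unfolding assms(2) by (rule Cauchy_Schwarz_ineq_sum)
    finally show ?thesis .
  qed
  moreover have "quad_form I (\<lambda>i j. id_op i j - P i j) w
      = of_real ((\<Sum>i\<in>I. (cmod (w i))\<^sup>2) - (cmod (\<Sum>i\<in>I. cnj (w i) * v i))\<^sup>2 / N)" for w
    by (simp only: quad_form_diff quad_form_id_op[OF assms(1)] qf of_real_diff)
  ultimately show "loewner_le I P id_op"
    unfolding loewner_le_def psd_iff_quad_form[OF assms(1)]
    using assms(3) by (simp only: nonneg_Reals_of_real_iff) (simp add: pos_divide_le_eq)
qed

section \<open>Gram factorisation\<close>

lemma psd_diag_nonneg:
  assumes "finite I" "psd I B" "a \<in> I"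
  shows "B a a \<in> \<real>\<^sub>\<ge>\<^sub>0"
  using psd_quad_form[OF assms(2)] quad_form_unit[OF assms(1,3)] by metis

lemma psd_zero_diag_row:
  assumes "finite I" "psd I B" "a \<in> I" "j \<in> I" "B a a = 0"
  shows "B a j = 0"
proof (rule ccontr)
  assume "B a j \<noteq> 0"
  define m where "m = (cmod (B a j))\<^sup>2"
  define s where "s = (Re (B j j) + 1) / m"
  define e where "e = (\<lambda>i. (if i = j then 1 else 0) + (if i = a then - of_real s * B a j else 0))"
  have m: "m > 0" using \<open>B a j \<noteq> 0\<close> unfolding m_def by simp
  have "quad_form I B e = B j j - of_real (2 * s * m)"
  proof -
    have "(\<Sum>i\<in>I. cnj (if i = j then 1 else 0) * B i a) = cnj (B a j)"
      "(\<Sum>k\<in>I. B a k * (if k = j then 1 else 0)) = B a j"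
      using assms psd_cnj[OF assms(2,3,4)]
      by (simp_all add: if_distrib[of cnj] mult_if_delta mult.commute[of "B a _"] cong: if_cong)
    moreover have "cnj (B a j) * B a j = of_real m"
      unfolding m_def complex_norm_square by (simp add: mult.commute)
    ultimately show ?thesis
      using quad_form_shift[OF assms(1,3), of B "\<lambda>i. if i = j then 1 else 0"
          "- of_real s * B a j"]
        quad_form_unit[OF assms(1,4)] assms(5) unfolding e_def by (simp add: algebra_simps)
  qed
  moreover have "Re (B j j) \<ge> 0"
    using psd_diag_nonneg[OF assms(1,2,4)] by (simp add: complex_nonneg_Reals_iff)
  ultimately have "Re (quad_form I B e) < 0"
    using m by (simp add: s_def)
  then show False
    using psd_quad_form[OF assms(2), of e] by (simp add: complex_nonneg_Reals_iff)
qed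

lemma psd_schur_complement:
  assumes "finite I" "psd I B" "a \<in> I" "B a a \<noteq> 0"
  shows "psd I (\<lambda>i j. B i j - B i a * B a j / B a a)"
  unfolding psd_iff_quad_form[OF assms(1)]
proof
  fix v
  define p where "p = (\<Sum>j\<in>I. B a j * v j)"
  have real: "cnj (B a a) = B a a"
    using psd_cnj[OF assms(2,3,3)] by simp
  have col: "(\<Sum>i\<in>I. cnj (v i) * B i a) = cnj p"
    unfolding p_def using psd_cnj[OF assms(2) assms(3)] by (simp add: mult.commute)
  have "quad_form I (\<lambda>i j. B i a * B a j / B a a) v = (\<Sum>i\<in>I. cnj (v i) * B i a) * p / B a a"
    unfolding quad_form_def p_def sum_product sum_divide_distrib
    by (intro sum.cong refl) (simp add: algebra_simps)
  then have "quad_form I (\<lambda>i j. B i j - B i a * B a j / B a a) v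
      = quad_form I B v - cnj p * p / B a a"
    by (simp only: quad_form_diff col)
  also have "\<dots> = quad_form I B v + (- p / B a a) * cnj p + (- cnj p / B a a) * p
      + (- cnj p / B a a) * (- p / B a a) * B a a"
    using assms(4) by (simp add: field_simps)
  also have "\<dots> = quad_form I B (\<lambda>i. v i + (if i = a then - p / B a a else 0))"
    using quad_form_shift[OF assms(1,3), of B v "- p / B a a"] real
    unfolding col p_def[symmetric] by simp
  finally show "quad_form I (\<lambda>i j. B i j - B i a * B a j / B a a) v \<in> \<real>\<^sub>\<ge>\<^sub>0"
    using psd_quad_form[OF assms(2)] by simp
qed

lemma psd_pivot:
  assumes "finite I" "psd I B" "a \<in> I" and u: "\<And>i. u i = B i a / of_real (sqrt (Re (B a a)))"
  shows "psd I (\<lambda>i j. B i j - u i * cnj (u j))"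
    and "\<And>j. j \<in> I \<Longrightarrow> B a j = u a * cnj (u j)"
    and "\<And>i. i \<in> I \<Longrightarrow> B i a = u i * cnj (u a)"
proof -
  define d where "d = Re (B a a)"
  have d: "B a a = of_real d" "d \<ge> 0"
    using psd_diag_nonneg[OF assms(1-3)] unfolding d_def
    by (auto simp: complex_nonneg_Reals_iff complex_eq_iff)
  have sqrt: "of_real (sqrt d) * of_real (sqrt d) = (of_real d :: complex)"
    using d(2) by (simp flip: of_real_mult)
  \<comment> \<open>For \<open>B a a = 0\<close> both sides vanish, as division by zero yields zero.\<close>
  have uu: "u i * cnj (u j) = B i a * B a j / B a a" if "j \<in> I" for i j
    using psd_cnj[OF assms(2) that assms(3)] sqrt unfolding u d_def[symmetric] d(1) by simp
  have zero: "B a j = 0" "B j a = 0" if "j \<in> I" "B a a = 0" for j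
    using psd_zero_diag_row[OF assms(1-3) that(1,2)] psd_cnj[OF assms(2,3) that(1)] by simp_all
  have "psd I (\<lambda>i j. B i j - B i a * B a j / B a a)"
    using psd_schur_complement[OF assms(1-3)] assms(2) by (cases "B a a = 0") simp_all
  then show "psd I (\<lambda>i j. B i j - u i * cnj (u j))"
    by (rule iffD1[OF psd_cong, rotated]) (simp add: uu)
  show "B a j = u a * cnj (u j)" if "j \<in> I" for j
    using zero[OF that] uu[OF that] by (cases "B a a = 0") simp_all
  show "B i a = u i * cnj (u a)" if "i \<in> I" for i
    using zero[OF that] uu[OF assms(3)] by (cases "B a a = 0") simp_all
qed

lemma psd_gram_decomposition:
  assumes "finite I" "psd I B"
  shows "\<exists>(n::nat) w. \<forall>i\<in>I. \<forall>j\<in>I. B i j = (\<Sum>k<n. w k i * cnj (w k j))"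
proof -
  \<comment> \<open>Cholesky elimination, by induction on a set \<open>J\<close> containing the support of \<open>B\<close>.\<close>
  have "\<exists>(n::nat) w. \<forall>i\<in>I. \<forall>j\<in>I. B i j = (\<Sum>k<n. w k i * cnj (w k j))"
    if "J \<subseteq> I" "psd I B" "\<forall>i\<in>I. \<forall>j\<in>I. B i j \<noteq> 0 \<longrightarrow> i \<in> J \<and> j \<in> J" for J B
    using finite_subset[OF that(1) assms(1)] that
  proof (induction J arbitrary: B rule: finite_induct)
    case empty
    then show ?case by (intro exI[of _ 0]) auto
  next
    case (insert a J)
    define u where "u i = B i a / of_real (sqrt (Re (B a a)))" for i
    have a: "a \<in> I" and J: "J \<subseteq> I" using insert.prems(1) by simp_all
    note pivot = psd_pivot[OF assms(1) insert.prems(2) a u_def]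
    have "\<forall>i\<in>I. \<forall>j\<in>I. B i j - u i * cnj (u j) \<noteq> 0 \<longrightarrow> i \<in> J \<and> j \<in> J"
    proof (intro ballI impI)
      fix i j assume ij: "i \<in> I" "j \<in> I" and ne: "B i j - u i * cnj (u j) \<noteq> 0"
      have "i \<noteq> a" "j \<noteq> a" using ne pivot(2,3) ij by auto
      moreover have "u i \<noteq> 0 \<or> B i j \<noteq> 0" "u j \<noteq> 0 \<or> B i j \<noteq> 0" using ne by auto
      ultimately show "i \<in> J \<and> j \<in> J"
        using insert.prems(3) ij a unfolding u_def by fastforce
    qed
    with insert.IH[OF J pivot(1)] obtain n :: nat and w
      where w: "\<forall>i\<in>I. \<forall>j\<in>I. B i j - u i * cnj (u j) = (\<Sum>k<n. w k i * cnj (w k j))"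
      by blast
    have "\<forall>i\<in>I. \<forall>j\<in>I. B i j = (\<Sum>k<Suc n. (w(n := u)) k i * cnj ((w(n := u)) k j))"
      using w by (simp add: algebra_simps)
    then show ?case by blast
  qed
  then show ?thesis using assms by blast
qed

lemma tr_mmult_gram:
  assumes "\<And>i j. i \<in> I \<Longrightarrow> j \<in> I \<Longrightarrow> M i j = (\<Sum>k\<in>G. w k i * cnj (w k j))"
  shows "tr I (mmult I A M) = (\<Sum>k\<in>G. quad_form I A (w k))"
  unfolding tr_def mmult_def quad_form_def using assms
  by (simp add: sum_distrib_left sum.swap[where A = G] algebra_simps)

lemma tr_mmult_psd:
  assumes "finite I" "psd I A" "psd I M"
  shows "tr I (mmult I A M) \<in> \<real>\<^sub>\<ge>\<^sub>0"
proof -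
  obtain n :: nat and w where "\<forall>i\<in>I. \<forall>j\<in>I. M i j = (\<Sum>k<n. w k i * cnj (w k j))"
    using psd_gram_decomposition[OF assms(1,3)] by blast
  then show ?thesis
    by (simp add: tr_mmult_gram psd_quad_form[OF assms(2)] sum_in_nonneg_Reals)
qed

section \<open>Tensor products\<close>

definition tensor_op :: "'l set \<Rightarrow> ('l \<Rightarrow> 'a op) \<Rightarrow> ('l \<Rightarrow> 'a) op" where
  "tensor_op F A = (\<lambda>a b. \<Prod>l\<in>F. A l (a l) (b l))"

lemma psd_tensor_op:
  assumes "finite F" "\<And>l. l \<in> F \<Longrightarrow> finite (I l)" "\<And>l. l \<in> F \<Longrightarrow> psd (I l) (A l)"
  shows "psd (PiE F I) (tensor_op F A)"
proof -
  have "\<forall>l\<in>F. \<exists>n::nat. \<exists>w. \<forall>i\<in>I l. \<forall>j\<in>I l. A l i j = (\<Sum>k<n. w k i * cnj (w k j))"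
    by (blast intro: psd_gram_decomposition assms(2,3))
  from bchoice[OF this] obtain n
    where "\<forall>l\<in>F. \<exists>w. \<forall>i\<in>I l. \<forall>j\<in>I l. A l i j = (\<Sum>k<(n l :: nat). w k i * cnj (w k j))"
    by blast
  from bchoice[OF this] obtain w
    where nw: "\<forall>l\<in>F. \<forall>i\<in>I l. \<forall>j\<in>I l. A l i j = (\<Sum>k<n l. w l k i * cnj (w l k j))"
    by blast
  define u where "u \<kappa> a = (\<Prod>l\<in>F. w l (\<kappa> l) (a l))" for \<kappa> a
  show ?thesis
  proof (rule psd_gram[where G = "PiE F (\<lambda>l. {..<n l})" and u = u])
    show "finite (PiE F I)"
      using assms(1,2) by (simp add: finite_PiE)
    fix a b assume "a \<in> PiE F I" "b \<in> PiE F I"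
    then have "tensor_op F A a b = (\<Prod>l\<in>F. \<Sum>k<n l. w l k (a l) * cnj (w l k (b l)))"
      unfolding tensor_op_def by (intro prod.cong refl) (auto simp: nw PiE_iff)
    also have "\<dots> = (\<Sum>\<kappa>\<in>PiE F (\<lambda>l. {..<n l}). \<Prod>l\<in>F. w l (\<kappa> l) (a l) * cnj (w l (\<kappa> l) (b l)))"
      using assms(1) by (rule prod_sum_PiE) simp
    also have "\<dots> = (\<Sum>\<kappa>\<in>PiE F (\<lambda>l. {..<n l}). u \<kappa> a * cnj (u \<kappa> b))"
      unfolding u_def by (simp add: prod.distrib cnj_prod)
    finally show "tensor_op F A a b = (\<Sum>\<kappa>\<in>PiE F (\<lambda>l. {..<n l}). u \<kappa> a * cnj (u \<kappa> b))" .
  qed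
qed

lemma mmult_tensor_op:
  assumes "finite F" "\<And>l. l \<in> F \<Longrightarrow> finite (I l)"
  shows "mmult (PiE F I) (tensor_op F A) (tensor_op F B)
    = tensor_op F (\<lambda>l. mmult (I l) (A l) (B l))"
  unfolding mmult_def tensor_op_def
  by (simp add: prod_sum_PiE[OF assms] prod.distrib)

lemma tr_tensor_op:
  assumes "finite F" "\<And>l. l \<in> F \<Longrightarrow> finite (I l)"
  shows "tr (PiE F I) (tensor_op F A) = (\<Prod>l\<in>F. tr (I l) (A l))"
  unfolding tr_def tensor_op_def by (simp add: prod_sum_PiE[OF assms])

lemma tensor_op_scale:
  "tensor_op F (\<lambda>l i j. of_real (c l) * A l i j)
    = (\<lambda>a b. of_real (\<Prod>l\<in>F. c l) * tensor_op F A a b)"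
  unfolding tensor_op_def by (simp add: prod.distrib of_real_prod)

lemma tensor_op_id_op:
  assumes "finite F" "a \<in> PiE F I" "b \<in> PiE F I"
  shows "tensor_op F (\<lambda>_. id_op) a b = id_op a b"
proof (cases "a = b")
  case False
  then obtain l where "l \<in> F" "a l \<noteq> b l"
    using assms(2,3) PiE_ext by metis
  then show ?thesis
    using assms(1) False by (auto simp: tensor_op_def id_op_def intro!: prod_zero)
qed (simp add: tensor_op_def id_op_def)

lemma loewner_le_tensor_op:
  assumes F: "finite F" and fin: "\<And>l. l \<in> F \<Longrightarrow> finite (I l)"
    and psd: "\<And>l. l \<in> F \<Longrightarrow> psd (I l) (A l)"
    and le: "\<And>l. l \<in> F \<Longrightarrow> loewner_le (I l) (A l) (B l)"
  shows "loewner_le (PiE F I) (tensor_op F A) (tensor_op F B)"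
proof -
  define mix where "mix S = tensor_op F (\<lambda>l. if l \<in> S then B l else A l)" for S
  have fin_PiE: "finite (PiE F I)"
    using F fin by (simp add: finite_PiE)
  have psd_B: "psd (I l) (B l)" if "l \<in> F" for l
    using psd_add[OF fin psd le[unfolded loewner_le_def]] that by simp
  \<comment> \<open>Replace the factors \<open>A l\<close> by \<open>B l\<close> one at a time.\<close>
  have "loewner_le (PiE F I) (mix {}) (mix S)" if "S \<subseteq> F" for S
    using finite_subset[OF that F] that
  proof (induction S rule: finite_induct)
    case empty
    show ?case unfolding loewner_le_def using psd_zero by simp
  next
    case (insert k S)
    have k: "k \<in> F" and S: "S \<subseteq> F" using insert.prems by auto
    define P where
      "P l = (if l = k then (\<lambda>i j. B k i j - A k i j) else if l \<in> S then B l else A l)" for l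
    have split: "tensor_op F C a b = C k (a k) (b k) * (\<Prod>l\<in>F - {k}. C l (a l) (b l))" for C a b
      unfolding tensor_op_def using prod.remove[OF F k] .
    have "mix (insert k S) a b - mix S a b = tensor_op F P a b" for a b
    proof -
      have "(\<Prod>l\<in>F - {k}. (if l \<in> insert k S then B l else A l) (a l) (b l))
          = (\<Prod>l\<in>F - {k}. (if l \<in> S then B l else A l) (a l) (b l))"
        "(\<Prod>l\<in>F - {k}. P l (a l) (b l)) = (\<Prod>l\<in>F - {k}. (if l \<in> S then B l else A l) (a l) (b l))"
        unfolding P_def by (auto intro: prod.cong)
      then show ?thesis
        unfolding mix_def split[of _ a b] using insert.hyps(2) by (simp add: P_def algebra_simps)
    qed
    moreover have "psd (PiE F I) (tensor_op F P)"
      using F fin psd psd_B le by (intro psd_tensor_op) (auto simp: P_def loewner_le_def)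
    ultimately have "loewner_le (PiE F I) (mix S) (mix (insert k S))"
      unfolding loewner_le_def by simp
    then show ?case
      using loewner_le_trans[OF fin_PiE insert.IH[OF S]] by blast
  qed
  from this[OF order_refl] show ?thesis
    unfolding mix_def by (simp add: tensor_op_def cong: prod.cong)
qed

section \<open>Measurements and confidences\<close>

definition outcome_prob :: "'a set \<Rightarrow> 'a op \<Rightarrow> 'a op \<Rightarrow> real" where
  "outcome_prob I \<rho> E = Re (tr I (mmult I \<rho> E))"

lemma outcome_prob_nonneg: "finite I \<Longrightarrow> psd I \<rho> \<Longrightarrow> psd I E \<Longrightarrow> 0 \<le> outcome_prob I \<rho> E"
  using tr_mmult_psd[of I \<rho> E] by (simp add: outcome_prob_def complex_nonneg_Reals_iff)

lemma outcome_prob_scale: "outcome_prob I (\<lambda>i j. of_real c * A i j) E = c * outcome_prob I A E"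
  unfolding outcome_prob_def tr_def mmult_def by (simp add: sum_distrib_left algebra_simps)

lemma outcome_prob_avg_state:
  "outcome_prob I (avg_state K \<eta> \<rho>) E = (\<Sum>k\<in>K. \<eta> k * outcome_prob I (\<rho> k) E)"
  unfolding outcome_prob_def tr_def mmult_def avg_state_def
  by (simp add: sum_distrib_left sum_distrib_right sum.swap[where A = K] algebra_simps Re_sum)

lemma quad_form_avg_state:
  "quad_form I (avg_state K \<eta> \<rho>) v = (\<Sum>k\<in>K. of_real (\<eta> k) * quad_form I (\<rho> k) v)"
  unfolding avg_state_def quad_form_sum[where A = "\<lambda>k i j. of_real (\<eta> k) * \<rho> k i j"]
  by (simp add: quad_form_scale)

lemma outcome_prob_mono:
  assumes "finite I" "loewner_le I A B" "psd I E"
  shows "outcome_prob I A E \<le> outcome_prob I B E"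
proof -
  have "outcome_prob I (\<lambda>i j. B i j - A i j) E = outcome_prob I B E - outcome_prob I A E"
    unfolding outcome_prob_def tr_def mmult_def by (simp add: algebra_simps sum_subtractf)
  then show ?thesis
    using outcome_prob_nonneg[OF assms(1) assms(2)[unfolded loewner_le_def] assms(3)] by simp
qed

lemma outcome_prob_id_op: "finite I \<Longrightarrow> outcome_prob I A id_op = Re (tr I A)"
  unfolding outcome_prob_def tr_def mmult_def id_op_def by (simp add: if_distrib cong: if_cong)

lemma outcome_prob_rank_one:
  "outcome_prob I A (\<lambda>i j. v i * cnj (v j) / of_real N) = Re (quad_form I A v) / N"
  unfolding outcome_prob_def tr_def mmult_def quad_form_def
  by (simp add: sum_divide_distrib algebra_simps flip: Re_divide_of_real)

lemma outcome_prob_tensor_op: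
  assumes "finite F" "\<And>l. l \<in> F \<Longrightarrow> finite (I l)"
    and "\<And>l. l \<in> F \<Longrightarrow> psd (I l) (\<rho> l)" "\<And>l. l \<in> F \<Longrightarrow> psd (I l) (E l)"
  shows "outcome_prob (PiE F I) (tensor_op F \<rho>) (tensor_op F E)
    = (\<Prod>l\<in>F. outcome_prob (I l) (\<rho> l) (E l))"
proof -
  have "tr (PiE F I) (mmult (PiE F I) (tensor_op F \<rho>) (tensor_op F E))
      = (\<Prod>l\<in>F. tr (I l) (mmult (I l) (\<rho> l) (E l)))"
    by (simp only: mmult_tensor_op[OF assms(1,2)] tr_tensor_op[OF assms(1,2)])
  then show ?thesis
    unfolding outcome_prob_def using tr_mmult_psd[OF assms(2-4)]
    by (simp add: Re_prod_Reals nonneg_Reals_Real)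
qed

definition binary_povm :: "'k \<Rightarrow> 'a op \<Rightarrow> 'k option \<Rightarrow> 'a op" where
  "binary_povm x P = (\<lambda>u. if u = Some x then P
                          else if u = None then (\<lambda>i j. id_op i j - P i j) else (\<lambda>i j. 0))"

lemma binary_povm_Some [simp]: "binary_povm x P (Some x) = P"
  by (simp add: binary_povm_def)

lemma povm_binary_povm:
  assumes "finite K" "x \<in> K" "psd I P" "loewner_le I P id_op"
  shows "povm I K (binary_povm x P)"
  unfolding povm_def
proof (intro conjI ballI)
  fix u assume "u \<in> insert None (Some ` K)"
  show "psd I (binary_povm x P u)"
    using assms(3,4) by (simp add: binary_povm_def loewner_le_def psd_zero)
next
  fix i j
  have "(\<Sum>u\<in>Some ` K. binary_povm x P u i j) = (\<Sum>k\<in>K. binary_povm x P (Some k) i j)"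
    by (simp add: sum.reindex)
  also have "\<dots> = (\<Sum>k\<in>K. if k = x then P i j else 0)"
    by (intro sum.cong refl) (simp add: binary_povm_def)
  finally have "(\<Sum>u\<in>Some ` K. binary_povm x P u i j) = (\<Sum>k\<in>K. if k = x then P i j else 0)" .
  then show "(\<Sum>u\<in>insert None (Some ` K). binary_povm x P u i j) = (if i = j then 1 else 0)"
    using assms(1,2) by (simp add: binary_povm_def id_op_def)
qed

lemma povm_psd: "povm I K M \<Longrightarrow> x \<in> K \<Longrightarrow> psd I (M (Some x))"
  unfolding povm_def by blast

lemma povm_loewner_le_id:
  assumes "finite I" "finite K" "povm I K M" "x \<in> K"
  shows "loewner_le I (M (Some x)) id_op"
proof -
  let ?U = "insert None (Some ` K)"
  have "id_op i j - M (Some x) i j = (\<Sum>u\<in>?U - {Some x}. M u i j)" if "i \<in> I" "j \<in> I" for i j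
    using assms(3) that sum.remove[of ?U "Some x" "\<lambda>u. M u i j"] assms(2,4)
    by (simp add: povm_def id_op_def)
  moreover have "psd I (\<lambda>i j. \<Sum>u\<in>?U - {Some x}. M u i j)"
    using assms(1,3) by (intro psd_sum) (auto simp: povm_def)
  ultimately show ?thesis
    unfolding loewner_le_def by (subst psd_cong) auto
qed

definition confidence ::
    "'a set \<Rightarrow> 'k set \<Rightarrow> ('k \<Rightarrow> real) \<Rightarrow> ('k \<Rightarrow> 'a op) \<Rightarrow> 'k \<Rightarrow> ('k option \<Rightarrow> 'a op) \<Rightarrow> real" where
  "confidence I K \<eta> \<rho> x M =
     \<eta> x * outcome_prob I (\<rho> x) (M (Some x)) / outcome_prob I (avg_state K \<eta> \<rho>) (M (Some x))"

definition confidences :: "'a set \<Rightarrow> 'k set \<Rightarrow> ('k \<Rightarrow> real) \<Rightarrow> ('k \<Rightarrow> 'a op) \<Rightarrow> 'k \<Rightarrow> real set" where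
  "confidences I K \<eta> \<rho> x = confidence I K \<eta> \<rho> x `
     {M. povm I K M \<and> outcome_prob I (avg_state K \<eta> \<rho>) (M (Some x)) > 0}"

lemma max_conf_eq_Sup: "max_conf I K \<eta> \<rho> x = Sup (confidences I K \<eta> \<rho> x)"
  unfolding max_conf_def confidences_def confidence_def outcome_prob_def
  by (simp add: setcompr_eq_image)

lemma confidence_in_confidences:
  "povm I K M \<Longrightarrow> outcome_prob I (avg_state K \<eta> \<rho>) (M (Some x)) > 0
    \<Longrightarrow> confidence I K \<eta> \<rho> x M \<in> confidences I K \<eta> \<rho> x"
  unfolding confidences_def by blast

lemma confidence_le_if_loewner_le:
  assumes "finite I" "x \<in> K"
    and "loewner_le I (\<lambda>i j. of_real (\<eta> x) * \<rho> x i j) (\<lambda>i j. of_real c * avg_state K \<eta> \<rho> i j)"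
    and "e \<in> confidences I K \<eta> \<rho> x"
  shows "e \<le> c"
proof -
  obtain M where M: "povm I K M" and pos: "outcome_prob I (avg_state K \<eta> \<rho>) (M (Some x)) > 0"
    and e: "e = confidence I K \<eta> \<rho> x M"
    using assms(4) unfolding confidences_def by blast
  have "\<eta> x * outcome_prob I (\<rho> x) (M (Some x))
      \<le> c * outcome_prob I (avg_state K \<eta> \<rho>) (M (Some x))"
    using outcome_prob_mono[OF assms(1,3) povm_psd[OF M assms(2)]]
    by (simp add: outcome_prob_scale)
  then show ?thesis
    unfolding e confidence_def using pos by (simp add: pos_divide_le_eq)
qed

context
  fixes I :: "'a set" and K :: "'k set" and \<eta> :: "'k \<Rightarrow> real" and \<rho> :: "'k \<Rightarrow> 'a op"
  assumes ens: "ensemble I K \<eta> \<rho>"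
begin

lemma ensemble_finite: "finite I" "finite K"
  using ens unfolding ensemble_def by auto

lemma ensemble_prob_pos: "k \<in> K \<Longrightarrow> \<eta> k > 0"
  using ens unfolding ensemble_def by auto

lemma ensemble_state_psd: "k \<in> K \<Longrightarrow> psd I (\<rho> k)"
  using ens unfolding ensemble_def density_def by auto

lemma psd_avg_state: "psd I (avg_state K \<eta> \<rho>)"
  unfolding avg_state_def
  using ensemble_finite(1) ensemble_state_psd ensemble_prob_pos
  by (intro psd_sum psd_scale) (auto intro: less_imp_le)

lemma outcome_prob_le_avg_state:
  assumes "x \<in> K" "psd I E"
  shows "\<eta> x * outcome_prob I (\<rho> x) E \<le> outcome_prob I (avg_state K \<eta> \<rho>) E"
  unfolding outcome_prob_avg_state
  using assms ensemble_finite ensemble_prob_pos ensemble_state_psd outcome_prob_nonneg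
  by (intro member_le_sum) (auto intro!: mult_nonneg_nonneg outcome_prob_nonneg simp: less_imp_le)

lemma confidences_subset_Icc: "x \<in> K \<Longrightarrow> confidences I K \<eta> \<rho> x \<subseteq> {0..1}"
proof
  fix e assume x: "x \<in> K" and "e \<in> confidences I K \<eta> \<rho> x"
  then obtain M where M: "povm I K M" and pos: "outcome_prob I (avg_state K \<eta> \<rho>) (M (Some x)) > 0"
    and e: "e = confidence I K \<eta> \<rho> x M"
    unfolding confidences_def by blast
  have "0 \<le> \<eta> x * outcome_prob I (\<rho> x) (M (Some x))"
    using ensemble_finite ensemble_prob_pos[OF x] ensemble_state_psd[OF x] povm_psd[OF M x]
    by (simp add: outcome_prob_nonneg)
  then show "e \<in> {0..1}"
    using outcome_prob_le_avg_state[OF x povm_psd[OF M x]] pos unfolding e confidence_def by simp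
qed

lemma bdd_above_confidences: "x \<in> K \<Longrightarrow> bdd_above (confidences I K \<eta> \<rho> x)"
  using confidences_subset_Icc by (meson bdd_above_Icc bdd_above_mono)

lemma prob_in_confidences:
  assumes "x \<in> K"
  shows "\<eta> x \<in> confidences I K \<eta> \<rho> x"
proof -
  have tr: "Re (tr I (\<rho> k)) = 1" if "k \<in> K" for k
    using ens that unfolding ensemble_def density_def by simp
  have "povm I K (binary_povm x id_op)"
    using ensemble_finite assms psd_id_op psd_zero
    by (intro povm_binary_povm) (auto simp: loewner_le_def)
  moreover have "outcome_prob I (avg_state K \<eta> \<rho>) id_op = 1"
    using ens tr
    unfolding outcome_prob_avg_state outcome_prob_id_op[OF ensemble_finite(1)] ensemble_def
    by simp
  ultimately have "confidence I K \<eta> \<rho> x (binary_povm x id_op) \<in> confidences I K \<eta> \<rho> x"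
    by (intro confidence_in_confidences) simp_all
  then show ?thesis
    using assms tr \<open>outcome_prob I (avg_state K \<eta> \<rho>) id_op = 1\<close>
    by (simp add: confidence_def outcome_prob_id_op[OF ensemble_finite(1)])
qed

\<comment> \<open>Test the confidence against the rank-one measurement along \<open>v\<close>.\<close>
lemma quad_form_le_max_conf:
  assumes x: "x \<in> K"
  shows "\<eta> x * Re (quad_form I (\<rho> x) v)
    \<le> max_conf I K \<eta> \<rho> x * Re (quad_form I (avg_state K \<eta> \<rho>) v)"
proof -
  let ?q = "Re (quad_form I (avg_state K \<eta> \<rho>) v)" and ?qx = "Re (quad_form I (\<rho> x) v)"
  have nonneg: "0 \<le> \<eta> k * Re (quad_form I (\<rho> k) v)" if "k \<in> K" for k
    using psd_quad_form[OF ensemble_state_psd[OF that]] ensemble_prob_pos[OF that]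
    by (simp add: complex_nonneg_Reals_iff)
  have "\<eta> x * ?qx \<le> (\<Sum>k\<in>K. \<eta> k * Re (quad_form I (\<rho> k) v))"
    using ensemble_finite(2) x nonneg by (intro member_le_sum) auto
  then have le: "\<eta> x * ?qx \<le> ?q"
    by (simp add: quad_form_avg_state Re_sum)
  show ?thesis
  proof (cases "?q > 0")
    case False
    then have "?q = 0" using le nonneg[OF x] by linarith
    then show ?thesis using le by simp
  next
    case True
    define N where "N = (\<Sum>i\<in>I. (cmod (v i))\<^sup>2)"
    have "N \<noteq> 0"
    proof
      assume "N = 0"
      then have "\<forall>i\<in>I. v i = 0"
        unfolding N_def using ensemble_finite(1) by (simp add: sum_nonneg_eq_0_iff)
      then show False
        using True by (simp add: quad_form_def)
    qed
    then have N: "N > 0"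
      unfolding N_def by (simp add: order_less_le sum_nonneg)
    define P where "P = (\<lambda>i j. v i * cnj (v j) / of_real N)"
    have "povm I K (binary_povm x P)"
      using rank_one_projector[OF ensemble_finite(1) N_def N] ensemble_finite(2) x
      unfolding P_def by (intro povm_binary_povm)
    moreover have "outcome_prob I (avg_state K \<eta> \<rho>) P = ?q / N" "outcome_prob I (\<rho> x) P = ?qx / N"
      unfolding P_def by (simp_all add: outcome_prob_rank_one)
    ultimately have "confidence I K \<eta> \<rho> x (binary_povm x P) \<in> confidences I K \<eta> \<rho> x"
      using True N by (intro confidence_in_confidences) simp_all
    moreover have "confidence I K \<eta> \<rho> x (binary_povm x P) = \<eta> x * ?qx / ?q"
      using \<open>outcome_prob I (avg_state K \<eta> \<rho>) P = ?q / N\<close> \<open>outcome_prob I (\<rho> x) P = ?qx / N\<close> N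
      by (simp add: confidence_def)
    ultimately have "\<eta> x * ?qx / ?q \<le> max_conf I K \<eta> \<rho> x"
      unfolding max_conf_eq_Sup using bdd_above_confidences[OF x] by (metis cSup_upper)
    then show ?thesis
      using True by (simp add: pos_divide_le_eq mult.commute)
  qed
qed

lemma loewner_le_max_conf:
  assumes "x \<in> K"
  shows "loewner_le I (\<lambda>i j. of_real (\<eta> x) * \<rho> x i j)
           (\<lambda>i j. of_real (max_conf I K \<eta> \<rho> x) * avg_state K \<eta> \<rho> i j)"
  unfolding loewner_le_def psd_iff_quad_form[OF ensemble_finite(1)] quad_form_diff quad_form_scale
  using quad_form_le_max_conf[OF assms] psd_quad_form[OF psd_avg_state]
    psd_quad_form[OF ensemble_state_psd[OF assms]]
  by (simp add: complex_nonneg_Reals_iff)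

end

section \<open>Sequence ensembles\<close>

lemma seq_state_eq_tensor_op: "seq_state L \<rho> c = tensor_op {1..L} (\<lambda>l. \<rho> l (c l))"
  unfolding seq_state_def tensor_op_def ..

lemma avg_state_seq:
  assumes "\<And>l. l \<in> {1..L} \<Longrightarrow> finite (K l)"
  shows "avg_state (seq_labels L K) (seq_prob L \<eta>) (seq_state L \<rho>)
    = tensor_op {1..L} (\<lambda>l. avg_state (K l) (\<eta> l) (\<rho> l))"
proof (intro ext)
  fix a b
  have "(\<Prod>l\<in>{1..L}. \<Sum>k\<in>K l. of_real (\<eta> l k) * \<rho> l k (a l) (b l))
      = (\<Sum>c\<in>PiE {1..L} K. \<Prod>l\<in>{1..L}. of_real (\<eta> l (c l)) * \<rho> l (c l) (a l) (b l))"
    using assms by (intro prod_sum_PiE) simp_all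
  then show "avg_state (seq_labels L K) (seq_prob L \<eta>) (seq_state L \<rho>) a b
      = tensor_op {1..L} (\<lambda>l. avg_state (K l) (\<eta> l) (\<rho> l)) a b"
    unfolding avg_state_def seq_labels_def seq_prob_def seq_state_def tensor_op_def
    by (simp add: of_real_prod prod.distrib)
qed

lemma seq_confidences_le_prod_max_conf:
  assumes ens: "\<And>l. l \<in> {1..L} \<Longrightarrow> ensemble (I l) (K l) (\<eta> l) (\<rho> l)"
    and x: "x \<in> seq_labels L K"
    and e: "e \<in> confidences (seq_basis L I) (seq_labels L K) (seq_prob L \<eta>) (seq_state L \<rho>) x"
  shows "e \<le> (\<Prod>l\<in>{1..L}. max_conf (I l) (K l) (\<eta> l) (\<rho> l) (x l))"
proof (rule confidence_le_if_loewner_le[OF _ x _ e])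
  have fin: "\<And>l. l \<in> {1..L} \<Longrightarrow> finite (I l)" "\<And>l. l \<in> {1..L} \<Longrightarrow> finite (K l)"
    using ensemble_finite[OF ens] by auto
  have xl: "\<And>l. l \<in> {1..L} \<Longrightarrow> x l \<in> K l"
    using x unfolding seq_labels_def by auto
  show "finite (seq_basis L I)"
    unfolding seq_basis_def using fin(1) by (intro finite_PiE) auto
  have "loewner_le (seq_basis L I)
      (tensor_op {1..L} (\<lambda>l i j. of_real (\<eta> l (x l)) * \<rho> l (x l) i j))
      (tensor_op {1..L} (\<lambda>l i j. of_real (max_conf (I l) (K l) (\<eta> l) (\<rho> l) (x l))
                                  * avg_state (K l) (\<eta> l) (\<rho> l) i j))"
    unfolding seq_basis_def
    using fin(1) ensemble_state_psd[OF ens] ensemble_prob_pos[OF ens]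
      loewner_le_max_conf[OF ens] xl
    by (intro loewner_le_tensor_op psd_scale) (auto intro: less_imp_le)
  moreover have "tensor_op {1..L} (\<lambda>l i j. of_real (\<eta> l (x l)) * \<rho> l (x l) i j)
      = (\<lambda>a b. of_real (seq_prob L \<eta> x) * seq_state L \<rho> x a b)"
    by (simp only: tensor_op_scale seq_prob_def seq_state_eq_tensor_op)
  moreover have "tensor_op {1..L} (\<lambda>l i j. of_real (max_conf (I l) (K l) (\<eta> l) (\<rho> l) (x l))
                                  * avg_state (K l) (\<eta> l) (\<rho> l) i j)
      = (\<lambda>a b. of_real (\<Prod>l\<in>{1..L}. max_conf (I l) (K l) (\<eta> l) (\<rho> l) (x l))
               * avg_state (seq_labels L K) (seq_prob L \<eta>) (seq_state L \<rho>) a b)"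
    by (simp only: tensor_op_scale avg_state_seq[OF fin(2)])
  ultimately show "loewner_le (seq_basis L I)
      (\<lambda>a b. of_real (seq_prob L \<eta> x) * seq_state L \<rho> x a b)
      (\<lambda>a b. of_real (\<Prod>l\<in>{1..L}. max_conf (I l) (K l) (\<eta> l) (\<rho> l) (x l))
               * avg_state (seq_labels L K) (seq_prob L \<eta>) (seq_state L \<rho>) a b)"
    by simp
qed

lemma seq_product_measurement:
  assumes ens: "\<And>l. l \<in> {1..L} \<Longrightarrow> ensemble (I l) (K l) (\<eta> l) (\<rho> l)"
    and x: "x \<in> seq_labels L K" and M: "\<And>l. l \<in> {1..L} \<Longrightarrow> povm (I l) (K l) (M l)"
  defines "E \<equiv> tensor_op {1..L} (\<lambda>l. M l (Some (x l)))"
  shows "povm (seq_basis L I) (seq_labels L K) (binary_povm x E)"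
    and "outcome_prob (seq_basis L I) (seq_state L \<rho> x) E
           = (\<Prod>l\<in>{1..L}. outcome_prob (I l) (\<rho> l (x l)) (M l (Some (x l))))"
    and "outcome_prob (seq_basis L I)
             (avg_state (seq_labels L K) (seq_prob L \<eta>) (seq_state L \<rho>)) E
           = (\<Prod>l\<in>{1..L}. outcome_prob (I l) (avg_state (K l) (\<eta> l) (\<rho> l)) (M l (Some (x l))))"
proof -
  have fin: "\<And>l. l \<in> {1..L} \<Longrightarrow> finite (I l)" "\<And>l. l \<in> {1..L} \<Longrightarrow> finite (K l)"
    using ensemble_finite[OF ens] by auto
  have xl: "\<And>l. l \<in> {1..L} \<Longrightarrow> x l \<in> K l"
    using x unfolding seq_labels_def by auto
  have psd_M: "\<And>l. l \<in> {1..L} \<Longrightarrow> psd (I l) (M l (Some (x l)))"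
    by (rule povm_psd[OF M xl])
  have "loewner_le (seq_basis L I) E (tensor_op {1..L} (\<lambda>_. id_op))"
    unfolding E_def seq_basis_def using fin psd_M povm_loewner_le_id[OF fin M xl]
    by (intro loewner_le_tensor_op) auto
  then have "loewner_le (seq_basis L I) E id_op"
    unfolding loewner_le_def seq_basis_def by (subst (asm) psd_cong) (auto simp: tensor_op_id_op)
  then show "povm (seq_basis L I) (seq_labels L K) (binary_povm x E)"
    using fin psd_M x unfolding E_def seq_basis_def seq_labels_def
    by (intro povm_binary_povm psd_tensor_op finite_PiE) auto
  show "outcome_prob (seq_basis L I) (seq_state L \<rho> x) E
      = (\<Prod>l\<in>{1..L}. outcome_prob (I l) (\<rho> l (x l)) (M l (Some (x l))))"
    unfolding E_def seq_basis_def seq_state_eq_tensor_op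
    using fin psd_M ensemble_state_psd[OF ens xl] by (intro outcome_prob_tensor_op) auto
  have avg: "avg_state (seq_labels L K) (seq_prob L \<eta>) (seq_state L \<rho>)
      = tensor_op {1..L} (\<lambda>l. avg_state (K l) (\<eta> l) (\<rho> l))"
    by (rule avg_state_seq[OF fin(2)])
  show "outcome_prob (seq_basis L I) (avg_state (seq_labels L K) (seq_prob L \<eta>) (seq_state L \<rho>)) E
      = (\<Prod>l\<in>{1..L}. outcome_prob (I l) (avg_state (K l) (\<eta> l) (\<rho> l)) (M l (Some (x l))))"
    unfolding E_def seq_basis_def avg
    using fin psd_M psd_avg_state[OF ens] by (intro outcome_prob_tensor_op) auto
qed

lemma prod_confidences_in_seq_confidences:
  assumes ens: "\<And>l. l \<in> {1..L} \<Longrightarrow> ensemble (I l) (K l) (\<eta> l) (\<rho> l)"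
    and x: "x \<in> seq_labels L K"
    and r: "r \<in> (\<Pi> l\<in>{1..L}. confidences (I l) (K l) (\<eta> l) (\<rho> l) (x l))"
  shows "(\<Prod>l\<in>{1..L}. r l)
    \<in> confidences (seq_basis L I) (seq_labels L K) (seq_prob L \<eta>) (seq_state L \<rho>) x"
proof -
  let ?avg = "\<lambda>l. avg_state (K l) (\<eta> l) (\<rho> l)"
  have "\<forall>l\<in>{1..L}. \<exists>Ml. (povm (I l) (K l) Ml \<and> outcome_prob (I l) (?avg l) (Ml (Some (x l))) > 0)
      \<and> r l = confidence (I l) (K l) (\<eta> l) (\<rho> l) (x l) Ml"
    using r unfolding confidences_def by blast
  from bchoice[OF this] obtain M where M_spec: "\<forall>l\<in>{1..L}.
      (povm (I l) (K l) (M l) \<and> outcome_prob (I l) (?avg l) (M l (Some (x l))) > 0)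
      \<and> r l = confidence (I l) (K l) (\<eta> l) (\<rho> l) (x l) (M l)"
    by blast
  have M: "\<And>l. l \<in> {1..L} \<Longrightarrow> povm (I l) (K l) (M l)"
    and pos: "\<And>l. l \<in> {1..L} \<Longrightarrow> outcome_prob (I l) (?avg l) (M l (Some (x l))) > 0"
    using M_spec by blast+
  define E where "E = tensor_op {1..L} (\<lambda>l. M l (Some (x l)))"
  note product = seq_product_measurement[OF ens x M, folded E_def]
  have num: "outcome_prob (seq_basis L I) (seq_state L \<rho> x) E
      = (\<Prod>l\<in>{1..L}. outcome_prob (I l) (\<rho> l (x l)) (M l (Some (x l))))"
    by (rule product(2))
  have den: "outcome_prob (seq_basis L I)
      (avg_state (seq_labels L K) (seq_prob L \<eta>) (seq_state L \<rho>)) E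
      = (\<Prod>l\<in>{1..L}. outcome_prob (I l) (?avg l) (M l (Some (x l))))"
    by (rule product(3))
  have "(\<Prod>l\<in>{1..L}. r l) = (\<Prod>l\<in>{1..L}. confidence (I l) (K l) (\<eta> l) (\<rho> l) (x l) (M l))"
    using M_spec by simp
  also have "\<dots> = confidence (seq_basis L I) (seq_labels L K) (seq_prob L \<eta>) (seq_state L \<rho>) x
      (binary_povm x E)"
    unfolding confidence_def binary_povm_Some num den
    by (simp add: seq_prob_def prod_dividef prod.distrib)
  also have "\<dots> \<in> confidences (seq_basis L I) (seq_labels L K) (seq_prob L \<eta>) (seq_state L \<rho>) x"
  proof (rule confidence_in_confidences)
    show "povm (seq_basis L I) (seq_labels L K) (binary_povm x E)" by (rule product(1))
    have "0 < (\<Prod>l\<in>{1..L}. outcome_prob (I l) (?avg l) (M l (Some (x l))))"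
      by (rule prod_pos) (rule pos)
    then show "0 < outcome_prob (seq_basis L I)
        (avg_state (seq_labels L K) (seq_prob L \<eta>) (seq_state L \<rho>)) (binary_povm x E (Some x))"
      by (simp add: den)
  qed
  finally show ?thesis .
qed

lemma cSup_mult_le:
  fixes X :: "real set"
  assumes "X \<noteq> {}" "0 \<le> p" "\<And>y. y \<in> X \<Longrightarrow> y * p \<le> s"
  shows "Sup X * p \<le> s"
proof (cases "p = 0")
  case True
  then show ?thesis using assms(1,3) by fastforce
next
  case False
  then have "Sup X \<le> s / p"
    using assms by (intro cSup_least) (auto simp: pos_le_divide_eq)
  then show ?thesis
    using False assms(2) by (simp add: pos_le_divide_eq)
qed

lemma prod_Sup_le:
  fixes A :: "'l \<Rightarrow> real set"
  assumes "finite F" "\<And>l. l \<in> F \<Longrightarrow> A l \<noteq> {}" "\<And>l. l \<in> F \<Longrightarrow> bdd_above (A l)"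
    and "\<And>l y. l \<in> F \<Longrightarrow> y \<in> A l \<Longrightarrow> 0 \<le> y"
    and "\<And>r. r \<in> Pi F A \<Longrightarrow> (\<Prod>l\<in>F. r l) \<le> s"
  shows "(\<Prod>l\<in>F. Sup (A l)) \<le> s"
proof -
  \<comment> \<open>The factor \<open>c \<ge> 0\<close> collects the suprema already taken.\<close>
  have "c * (\<Prod>l\<in>G. Sup (A l)) \<le> s"
    if "G \<subseteq> F" "0 \<le> c" "\<And>r. r \<in> Pi G A \<Longrightarrow> c * (\<Prod>l\<in>G. r l) \<le> s" for G c
    using finite_subset[OF that(1) assms(1)] that
  proof (induction G arbitrary: c rule: finite_induct)
    case empty
    then show ?case by auto
  next
    case (insert a G)
    have a: "a \<in> F" using insert.prems(1) by simp
    obtain y0 where "y0 \<in> A a" using assms(2)[OF a] by blast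
    then have "0 \<le> Sup (A a)"
      using assms(3,4)[OF a] by (meson cSup_upper order_trans)
    have "c * Sup (A a) * (\<Prod>l\<in>G. Sup (A l)) \<le> s"
    proof (rule insert.IH)
      fix r assume r: "r \<in> Pi G A"
      have "Sup (A a) * (c * (\<Prod>l\<in>G. r l)) \<le> s"
      proof (rule cSup_mult_le)
        have "0 \<le> r l" if "l \<in> G" for l
          using r that assms(4) insert.prems(1) by blast
        then show "0 \<le> c * (\<Prod>l\<in>G. r l)"
          using insert.prems(2) by (simp add: prod_nonneg)
        fix y assume "y \<in> A a"
        then have "r(a := y) \<in> Pi (insert a G) A" using r by auto
        then have "c * (\<Prod>l\<in>insert a G. (r(a := y)) l) \<le> s"
          by (rule insert.prems(3))
        moreover have "(\<Prod>l\<in>insert a G. (r(a := y)) l) = y * (\<Prod>l\<in>G. r l)"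
          using insert.hyps by (auto intro!: prod.cong)
        ultimately show "y * (c * (\<Prod>l\<in>G. r l)) \<le> s"
          by (simp add: ac_simps)
      qed (use assms(2)[OF a] in simp)
      then show "c * Sup (A a) * (\<Prod>l\<in>G. r l) \<le> s" by (simp add: ac_simps)
    qed (use insert.prems \<open>0 \<le> Sup (A a)\<close> in simp_all)
    then show ?case
      using insert.hyps by (simp add: ac_simps)
  qed
  from this[of F 1] assms(5) show ?thesis by simp
qed

theorem theorem4:
  fixes L :: nat
    and I :: "nat \<Rightarrow> 'a set"
    and K :: "nat \<Rightarrow> 'k set"
    and \<eta> :: "nat \<Rightarrow> 'k \<Rightarrow> real"
    and \<rho> :: "nat \<Rightarrow> 'k \<Rightarrow> 'a op"
    and x :: "nat \<Rightarrow> 'k"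
  assumes "L \<ge> 1"
    and "\<And>l. l \<in> {1..L} \<Longrightarrow> ensemble (I l) (K l) (\<eta> l) (\<rho> l)"
    and "x \<in> seq_labels L K"
  shows "max_conf (seq_basis L I) (seq_labels L K) (seq_prob L \<eta>) (seq_state L \<rho>) x
         = (\<Prod>l\<in>{1..L}. max_conf (I l) (K l) (\<eta> l) (\<rho> l) (x l))"
proof -
  let ?S = "confidences (seq_basis L I) (seq_labels L K) (seq_prob L \<eta>) (seq_state L \<rho>) x"
  let ?A = "\<lambda>l. confidences (I l) (K l) (\<eta> l) (\<rho> l) (x l)"
  have xl: "\<And>l. l \<in> {1..L} \<Longrightarrow> x l \<in> K l"
    using assms(3) unfolding seq_labels_def by auto
  have upper: "\<And>e. e \<in> ?S \<Longrightarrow> e \<le> (\<Prod>l\<in>{1..L}. Sup (?A l))"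
    using seq_confidences_le_prod_max_conf[OF assms(2,3)] unfolding max_conf_eq_Sup .
  have "(\<lambda>l. \<eta> l (x l)) \<in> (\<Pi> l\<in>{1..L}. ?A l)"
    using prob_in_confidences[OF assms(2) xl] by blast
  then have "?S \<noteq> {}"
    using prod_confidences_in_seq_confidences[OF assms(2,3)] by blast
  then have "Sup ?S \<le> (\<Prod>l\<in>{1..L}. Sup (?A l))"
    using upper by (rule cSup_least)
  moreover have "(\<Prod>l\<in>{1..L}. Sup (?A l)) \<le> Sup ?S"
  proof (rule prod_Sup_le)
    show "?A l \<noteq> {}" if "l \<in> {1..L}" for l
      using prob_in_confidences[OF assms(2)[OF that] xl[OF that]] by blast
    show "bdd_above (?A l)" if "l \<in> {1..L}" for l
      using bdd_above_confidences[OF assms(2)[OF that] xl[OF that]] .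
    show "0 \<le> y" if "l \<in> {1..L}" "y \<in> ?A l" for l y
      using confidences_subset_Icc[OF assms(2)[OF that(1)] xl[OF that(1)]] that(2) by auto
    show "(\<Prod>l\<in>{1..L}. r l) \<le> Sup ?S" if "r \<in> Pi {1..L} ?A" for r
      using prod_confidences_in_seq_confidences[OF assms(2,3) that] upper
      by (rule cSup_upper[OF _ bdd_aboveI])
  qed simp
  ultimately show ?thesis
    unfolding max_conf_eq_Sup by simp
qed

end
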